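(* Let $t\ge 2$ and $n\ge t+5$ be integers with $n-t\equiv 2\pmod 3$. Then $\rho\big(K_1\vee (K_{1,t}\cup \tfrac{n-t-2}{3}K_3)\big)<\rho(K_{1,1,n-2})$.
   Context: $\rho$ denotes the spectral radius (largest adjacency eigenvalue). $G\vee H$ is the join of disjoint graphs $G$ and $H$ (disjoint union plus all edges between them), $G\cup H$ is the disjoint union, $kG$ denotes $k$ disjoint copies of $G$, $K_{1,t}$ is the star with $t$ leaves, and $K_{1,1,n-2}$ is the complete tripartite graph with parts of sizes $1,1,n-2$. *)

theory Defs
  imports "Jordan_Normal_Form.Spectral_Radius"
begin

text \<open>A finite simple graph on the vertex set {0..<n}, given by its number of
  vertices and an adjacency predicate (only its values on {0..<n} matter;
  all constructions below are symmetric and irreflexive).\<close>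
datatype sgraph = SG nat "nat \<Rightarrow> nat \<Rightarrow> bool"

fun nverts :: "sgraph \<Rightarrow> nat" where "nverts (SG n E) = n"
fun adjr :: "sgraph \<Rightarrow> nat \<Rightarrow> nat \<Rightarrow> bool" where "adjr (SG n E) = E"

definition gunion :: "sgraph \<Rightarrow> sgraph \<Rightarrow> sgraph" where
  "gunion G H = SG (nverts G + nverts H)
     (\<lambda>i j. (i < nverts G \<and> j < nverts G \<and> adjr G i j) \<or>
            (nverts G \<le> i \<and> nverts G \<le> j \<and> adjr H (i - nverts G) (j - nverts G)))"

definition gjoin :: "sgraph \<Rightarrow> sgraph \<Rightarrow> sgraph" where
  "gjoin G H = SG (nverts G + nverts H)
     (\<lambda>i j. adjr (gunion G H) i j \<or>
            (i < nverts G \<and> nverts G \<le> j \<and> j < nverts G + nverts H) \<or>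
            (j < nverts G \<and> nverts G \<le> i \<and> i < nverts G + nverts H))"

definition complete :: "nat \<Rightarrow> sgraph" where "complete m = SG m (\<lambda>i j. i \<noteq> j)"
definition empty_graph :: "nat \<Rightarrow> sgraph" where "empty_graph m = SG m (\<lambda>i j. False)"

definition star :: "nat \<Rightarrow> sgraph" where "star t = gjoin (complete 1) (empty_graph t)"

fun copies :: "nat \<Rightarrow> sgraph \<Rightarrow> sgraph" where
  "copies 0 G = empty_graph 0"
| "copies (Suc k) G = gunion G (copies k G)"

definition complete_tripartite :: "nat \<Rightarrow> nat \<Rightarrow> nat \<Rightarrow> sgraph" where
  "complete_tripartite a b c = gjoin (gjoin (empty_graph a) (empty_graph b)) (empty_graph c)"

definition adj_matrix :: "sgraph \<Rightarrow> complex mat" where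
  "adj_matrix G = mat (nverts G) (nverts G) (\<lambda>(i,j). if adjr G i j then 1 else 0)"

text \<open>Spectral radius (largest modulus of an adjacency eigenvalue, which for a
  graph equals the largest adjacency eigenvalue).\<close>
definition rho :: "sgraph \<Rightarrow> real" where
  "rho G = spectral_radius (adj_matrix G)"

end

theory Submission
  imports Defs
begin

text \<open>Write n = t + 2 + 3k. An upper bound on the spectral radius of
  K_1 \<or> (K_{1,t} \<union> kK_3) comes from the Collatz-Wielandt inequality: a positive vector v
  with A v \<le> \<mu> v forces \<rho> \<le> \<mu>. Taking v constant on the four vertex classes (apex, star
  centre, leaves, triangle vertices) reduces this to four scalar inequalities. For t + 3k \<ge> 7
  they hold at the root \<mu> > 4 of the cubic (\<mu> - 2)(\<mu>^2 - \<mu> - 2t) = 3k\<mu>; the two remaining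
  cases (t, k) = (2, 1), (3, 1) have explicit rational certificates. In every case
  \<mu>^2 - \<mu> < 2(n - 2). On the other side, K_{1,1,n-2} has the positive eigenvector
  (r, r, 2, ..., 2) with r^2 - r = 2(n - 2), so its spectral radius is r, and r > \<mu>.\<close>

lemma nverts_gunion [simp]: "nverts (gunion G H) = nverts G + nverts H"
  by (simp add: gunion_def)

lemma nverts_gjoin [simp]: "nverts (gjoin G H) = nverts G + nverts H"
  by (simp add: gjoin_def)

lemma nverts_complete [simp]: "nverts (complete m) = m"
  by (simp add: complete_def)

lemma nverts_empty_graph [simp]: "nverts (empty_graph m) = m"
  by (simp add: empty_graph_def)

lemma nverts_copies [simp]: "nverts (copies k G) = k * nverts G"
  by (induction k) auto

lemma nverts_star [simp]: "nverts (star t) = t + 1"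
  by (simp add: star_def)

lemma nverts_complete_tripartite [simp]: "nverts (complete_tripartite a b c) = a + b + c"
  by (simp add: complete_tripartite_def)

lemma adjr_gunion:
  "adjr (gunion G H) i j \<longleftrightarrow>
     (i < nverts G \<and> j < nverts G \<and> adjr G i j) \<or>
     (nverts G \<le> i \<and> nverts G \<le> j \<and> adjr H (i - nverts G) (j - nverts G))"
  by (simp add: gunion_def)

lemma adjr_gjoin:
  "adjr (gjoin G H) i j \<longleftrightarrow>
     adjr (gunion G H) i j \<or>
     (i < nverts G \<and> nverts G \<le> j \<and> j < nverts G + nverts H) \<or>
     (j < nverts G \<and> nverts G \<le> i \<and> i < nverts G + nverts H)"
  unfolding gjoin_def by simp

lemma adjr_complete [simp]: "adjr (complete m) i j \<longleftrightarrow> i \<noteq> j"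
  by (simp add: complete_def)

lemma adjr_empty_graph [simp]: "\<not> adjr (empty_graph m) i j"
  by (simp add: empty_graph_def)

lemma adjr_cone:
  "adjr (gjoin (complete 1) H) i j \<longleftrightarrow>
     (i = 0 \<and> 0 < j \<and> j \<le> nverts H) \<or> (j = 0 \<and> 0 < i \<and> i \<le> nverts H) \<or>
     (0 < i \<and> 0 < j \<and> adjr H (i - 1) (j - 1))"
  by (auto simp: adjr_gjoin adjr_gunion)

lemma adjr_star: "adjr (star t) i j \<longleftrightarrow> (i = 0 \<and> 0 < j \<and> j \<le> t) \<or> (j = 0 \<and> 0 < i \<and> i \<le> t)"
  unfolding star_def adjr_cone by simp

lemma adjr_copies:
  assumes "0 < nverts G"
  shows "adjr (copies k G) i j \<longleftrightarrow>
    i < k * nverts G \<and> j < k * nverts G \<and> i div nverts G = j div nverts G \<and>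
    adjr G (i mod nverts G) (j mod nverts G)"
proof (induction k arbitrary: i j)
  case 0
  then show ?case by (simp add: empty_graph_def)
next
  case (Suc k)
  let ?N = "nverts G"
  consider "i < ?N" "j < ?N" | "i < ?N \<longleftrightarrow> \<not> j < ?N" | "?N \<le> i" "?N \<le> j"
    by linarith
  then show ?case
  proof cases
    case 1
    then show ?thesis by (simp add: adjr_gunion)
  next
    case 2
    then have "i div ?N \<noteq> j div ?N"
      using assms by (metis div_eq_0_iff not_less not_gr0)
    then show ?thesis using 2 by (auto simp: adjr_gunion)
  next
    case 3
    then show ?thesis
      using assms by (auto simp: adjr_gunion Suc.IH le_div_geq le_mod_geq)
  qed
qed

lemma adjr_copies_complete:
  assumes "0 < m"
  shows "adjr (copies k (complete m)) i j \<longleftrightarrow>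
    i < k * m \<and> j < k * m \<and> i \<noteq> j \<and> i div m = j div m"
  using adjr_copies[of "complete m" k i j] assms
  by (auto simp: mod_eq_dvd_iff_nat) (metis div_mult_mod_eq)

lemma spectral_radius_le_if_subeigenvector:
  fixes A :: "complex mat" and v :: "nat \<Rightarrow> real"
  assumes A: "A \<in> carrier_mat n n" and n: "0 < n"
    and pos: "\<And>i. i < n \<Longrightarrow> 0 < v i"
    and sub: "\<And>i. i < n \<Longrightarrow> (\<Sum>j<n. cmod (A $$ (i, j)) * v j) \<le> \<mu> * v i"
  shows "spectral_radius A \<le> \<mu>"
proof -
  txt \<open>Compare an eigenvector w of an eigenvalue of maximal modulus with v at an index
    maximising |w_i| / v_i.\<close>
  obtain e where "e \<in> spectrum A" and \<rho>: "spectral_radius A = cmod e"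
    using spectral_radius_mem_max(1)[OF A n] by auto
  then obtain w where "eigenvector A w e"
    unfolding spectrum_def eigenvalue_def by auto
  then have w: "w \<in> carrier_vec n" "w \<noteq> 0\<^sub>v n" "A *\<^sub>v w = e \<cdot>\<^sub>v w"
    unfolding eigenvector_def using A by auto
  define r where "r i = cmod (w $ i) / v i" for i
  define c where "c = Max (r ` {..<n})"
  have "c \<in> r ` {..<n}"
    unfolding c_def using n by (intro Max_in) auto
  then obtain i0 where i0: "i0 < n" "r i0 = c"
    by auto
  have r_le: "r i \<le> c" if "i < n" for i
    using that unfolding c_def by (intro Max_ge) auto
  have w_le: "cmod (w $ i) \<le> c * v i" if "i < n" for i
    using r_le[OF that] pos[OF that] by (simp add: r_def divide_le_eq)
  obtain i1 where i1: "i1 < n" "w $ i1 \<noteq> 0"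
    using w(1,2) by (metis eq_vecI carrier_vecD index_zero_vec)
  have "0 < r i1"
    using pos[OF i1(1)] i1(2) by (simp add: r_def)
  then have "0 < c"
    using r_le[OF i1(1)] by linarith
  have wi0_eq: "cmod (w $ i0) = c * v i0"
    using i0 pos[OF i0(1)] by (auto simp: r_def field_simps)
  then have wi0: "0 < cmod (w $ i0)"
    using \<open>0 < c\<close> pos[OF i0(1)] by simp
  have "cmod e * cmod (w $ i0) = cmod (\<Sum>j<n. A $$ (i0, j) * w $ j)"
    using w i0 A by (auto simp: norm_mult scalar_prod_def lessThan_atLeast0 dest: arg_cong[of _ _ "\<lambda>x. x $ i0"])
  also have "\<dots> \<le> (\<Sum>j<n. cmod (A $$ (i0, j)) * cmod (w $ j))"
    by (rule order_trans[OF norm_sum]) (simp add: norm_mult)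
  also have "\<dots> \<le> (\<Sum>j<n. cmod (A $$ (i0, j)) * (c * v j))"
    by (intro sum_mono mult_left_mono w_le) auto
  also have "\<dots> = c * (\<Sum>j<n. cmod (A $$ (i0, j)) * v j)"
    by (simp add: sum_distrib_left algebra_simps)
  also have "\<dots> \<le> c * (\<mu> * v i0)"
    using sub[OF i0(1)] \<open>0 < c\<close> by simp
  also have "\<dots> = \<mu> * cmod (w $ i0)"
    using wi0_eq by simp
  finally show ?thesis
    using \<rho> wi0 by simp
qed

lemma eigenvalue_norm_le_spectral_radius:
  assumes A: "A \<in> carrier_mat n n" and n: "0 < n" and "eigenvector A w e"
  shows "cmod e \<le> spectral_radius A"
proof -
  have "e \<in> spectrum A"
    using assms(3) unfolding spectrum_def eigenvalue_def by auto
  then show ?thesis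
    by (intro spectral_radius_mem_max(2)[OF A n]) auto
qed

definition neighbours :: "sgraph \<Rightarrow> nat \<Rightarrow> nat set" where
  "neighbours G i = {j. j < nverts G \<and> adjr G i j}"

lemma adj_matrix_carrier [simp]: "adj_matrix G \<in> carrier_mat (nverts G) (nverts G)"
  by (simp add: adj_matrix_def)

lemma adj_matrix_index:
  "i < nverts G \<Longrightarrow> j < nverts G \<Longrightarrow> adj_matrix G $$ (i, j) = (if adjr G i j then 1 else 0)"
  by (simp add: adj_matrix_def)

lemma sum_adjr_eq_sum_neighbours:
  "(\<Sum>j<nverts G. if adjr G i j then f j else 0) = (\<Sum>j\<in>neighbours G i. f j)"
  by (simp add: sum.inter_filter[symmetric] neighbours_def lessThan_def)

lemma rho_le_if_subeigenvector:
  assumes "0 < nverts G" and pos: "\<And>i. i < nverts G \<Longrightarrow> 0 < v i"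
    and sub: "\<And>i. i < nverts G \<Longrightarrow> (\<Sum>j\<in>neighbours G i. v j) \<le> \<mu> * v i"
  shows "rho G \<le> \<mu>"
  unfolding rho_def
proof (rule spectral_radius_le_if_subeigenvector[OF adj_matrix_carrier assms(1) pos])
  fix i assume i: "i < nverts G"
  have "(\<Sum>j<nverts G. cmod (adj_matrix G $$ (i, j)) * v j) =
        (\<Sum>j<nverts G. if adjr G i j then v j else 0)"
    using i by (intro sum.cong) (auto simp: adj_matrix_index)
  then show "(\<Sum>j<nverts G. cmod (adj_matrix G $$ (i, j)) * v j) \<le> \<mu> * v i"
    using sub[OF i] by (simp add: sum_adjr_eq_sum_neighbours)
qed

lemma rho_eq_if_positive_eigenvector:
  assumes N: "0 < nverts G" and pos: "\<And>i. i < nverts G \<Longrightarrow> 0 < v i"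
    and eig: "\<And>i. i < nverts G \<Longrightarrow> (\<Sum>j\<in>neighbours G i. v j) = \<mu> * v i"
  shows "rho G = \<mu>"
proof (rule antisym)
  show "rho G \<le> \<mu>"
    using assms by (intro rho_le_if_subeigenvector[of G v]) auto
  define w where "w = vec (nverts G) (\<lambda>i. complex_of_real (v i))"
  have "eigenvector (adj_matrix G) w (complex_of_real \<mu>)"
    unfolding eigenvector_def
  proof (intro conjI)
    show "w \<noteq> 0\<^sub>v (dim_row (adj_matrix G))"
      using pos[OF N] N by (auto simp: w_def adj_matrix_def dest!: arg_cong[of _ _ "\<lambda>x. x $ 0"])
    show "adj_matrix G *\<^sub>v w = complex_of_real \<mu> \<cdot>\<^sub>v w"
    proof (rule eq_vecI)
      fix i assume "i < dim_vec (complex_of_real \<mu> \<cdot>\<^sub>v w)"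
      then have i: "i < nverts G" by (simp add: w_def)
      have "(adj_matrix G *\<^sub>v w) $ i = (\<Sum>j<nverts G. if adjr G i j then complex_of_real (v j) else 0)"
        using i by (auto simp: adj_matrix_def w_def scalar_prod_def lessThan_atLeast0 intro!: sum.cong)
      also have "\<dots> = complex_of_real (\<mu> * v i)"
        using eig[OF i] by (simp add: sum_adjr_eq_sum_neighbours flip: of_real_sum)
      finally show "(adj_matrix G *\<^sub>v w) $ i = (complex_of_real \<mu> \<cdot>\<^sub>v w) $ i"
        using i by (simp add: w_def)
    qed (simp add: w_def adj_matrix_def)
  qed (simp add: w_def adj_matrix_def)
  then have "cmod (complex_of_real \<mu>) \<le> rho G"
    unfolding rho_def by (rule eigenvalue_norm_le_spectral_radius[OF adj_matrix_carrier N])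
  moreover have "0 \<le> \<mu> * v 0"
    using eig[OF N] pos by (metis neighbours_def mem_Collect_eq less_imp_le sum_nonneg)
  then have "0 \<le> \<mu>"
    using pos[OF N] by (simp add: zero_le_mult_iff)
  ultimately show "\<mu> \<le> rho G"
    by simp
qed

lemma quadratic_root_eq:
  fixes c :: real
  assumes "0 \<le> c"
  shows "((1 + sqrt (1 + 4 * c)) / 2)^2 = (1 + sqrt (1 + 4 * c)) / 2 + c"
  using assms by (simp add: power2_eq_square field_simps)

lemma less_quadratic_root:
  fixes x c :: real
  assumes "0 \<le> c" and "x^2 - x < c"
  shows "x < (1 + sqrt (1 + 4 * c)) / 2"
proof -
  define r where "r = (1 + sqrt (1 + 4 * c)) / 2"
  have "1 / 2 \<le> r"
    unfolding r_def using assms(1) by simp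
  have "r^2 - r = c"
    using quadratic_root_eq[OF assms(1)] unfolding r_def by simp
  show ?thesis
    unfolding r_def[symmetric]
  proof (rule ccontr)
    assume "\<not> x < r"
    then have "0 \<le> (x - r) * (x + r - 1)"
      using \<open>1 / 2 \<le> r\<close> by (intro mult_nonneg_nonneg) auto
    then have "c \<le> x^2 - x"
      using \<open>r^2 - r = c\<close> by (simp add: power2_eq_square algebra_simps)
    with assms(2) show False
      by simp
  qed
qed

lemma adjr_complete_tripartite_1_1:
  "adjr (complete_tripartite 1 1 m) i j \<longleftrightarrow> i < m + 2 \<and> j < m + 2 \<and> i \<noteq> j \<and> (i < 2 \<or> j < 2)"
  unfolding complete_tripartite_def by (auto simp: adjr_gjoin adjr_gunion)

lemma rho_complete_tripartite_1_1:
  "rho (complete_tripartite 1 1 m) = (1 + sqrt (1 + 8 * real m)) / 2"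
proof (rule rho_eq_if_positive_eigenvector)
  define r where "r = (1 + sqrt (1 + 8 * real m)) / 2"
  have "r^2 = r + 2 * real m"
    using quadratic_root_eq[of "2 * real m"] unfolding r_def by simp
  have "0 < r"
    unfolding r_def by (simp add: add_pos_nonneg)
  let ?v = "\<lambda>i. if i < 2 then r else 2"
  show "0 < ?v i" for i
    using \<open>0 < r\<close> by simp
  fix i assume "i < nverts (complete_tripartite 1 1 m)"
  then consider "i < 2" | "2 \<le> i" "i < m + 2"
    by fastforce
  then show "(\<Sum>j\<in>neighbours (complete_tripartite 1 1 m) i. ?v j) = r * ?v i"
  proof cases
    case 1
    then have "neighbours (complete_tripartite 1 1 m) i = insert (1 - i) {2..<m + 2}"
      unfolding neighbours_def adjr_complete_tripartite_1_1 by auto presburger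
    moreover have "1 - i < 2"
      by simp
    ultimately show ?thesis
      using 1 \<open>r^2 = r + 2 * real m\<close> by (simp add: power2_eq_square)
  next
    case 2
    then have "neighbours (complete_tripartite 1 1 m) i = {0, 1}"
      unfolding neighbours_def adjr_complete_tripartite_1_1 by auto
    then show ?thesis
      using 2 by simp
  qed
qed simp

text \<open>Vertex 0 is the apex, vertex 1 the centre of the star, vertices 2, ..., t + 1 its
  leaves, and the triangles occupy t + 2 + 3q, t + 3 + 3q, t + 4 + 3q for q < k.\<close>

definition cone_star_triangles :: "nat \<Rightarrow> nat \<Rightarrow> sgraph" where
  "cone_star_triangles t k = gjoin (complete 1) (gunion (star t) (copies k (complete 3)))"

lemma nverts_cone_star_triangles [simp]: "nverts (cone_star_triangles t k) = t + 2 + 3 * k"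
  by (simp add: cone_star_triangles_def)

lemma adjr_cone_star_triangles:
  "adjr (cone_star_triangles t k) i j \<longleftrightarrow>
     (i = 0 \<and> 0 < j \<and> j < t + 2 + 3 * k) \<or> (j = 0 \<and> 0 < i \<and> i < t + 2 + 3 * k) \<or>
     (i = 1 \<and> 2 \<le> j \<and> j < t + 2) \<or> (j = 1 \<and> 2 \<le> i \<and> i < t + 2) \<or>
     (t + 2 \<le> i \<and> t + 2 \<le> j \<and> i < t + 2 + 3 * k \<and> j < t + 2 + 3 * k \<and> i \<noteq> j \<and>
      (i - (t + 2)) div 3 = (j - (t + 2)) div 3)"
proof (cases "i = 0 \<or> j = 0")
  case True
  then show ?thesis
    unfolding cone_star_triangles_def adjr_cone by auto
next
  case False
  then obtain i' j' where "i = Suc i'" "j = Suc j'"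
    by (meson not0_implies_Suc)
  then show ?thesis
    unfolding cone_star_triangles_def adjr_cone adjr_gunion adjr_star
    by (auto simp: adjr_copies_complete)
qed

lemma neighbours_cone_star_triangles_apex:
  "neighbours (cone_star_triangles t k) 0 = {1..<t + 2 + 3 * k}"
  by (auto simp: neighbours_def adjr_cone_star_triangles)

lemma neighbours_cone_star_triangles_centre:
  "neighbours (cone_star_triangles t k) 1 = insert 0 {2..<t + 2}"
  by (auto simp: neighbours_def adjr_cone_star_triangles)

lemma neighbours_cone_star_triangles_leaf:
  "2 \<le> i \<Longrightarrow> i < t + 2 \<Longrightarrow> neighbours (cone_star_triangles t k) i = {0, 1}"
  by (auto simp: neighbours_def adjr_cone_star_triangles)

lemma neighbours_cone_star_triangles_triangle:
  assumes "q < k" and "r < 3"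
  shows "neighbours (cone_star_triangles t k) (t + 2 + 3 * q + r) =
    insert 0 ({t + 2 + 3 * q..<t + 5 + 3 * q} - {t + 2 + 3 * q + r})"
proof -
  have same_triangle: "(j - (t + 2)) div 3 = q \<longleftrightarrow> t + 2 + 3 * q \<le> j \<and> j < t + 5 + 3 * q"
    if "t + 2 \<le> j" for j
    using that by auto
  show ?thesis
    using assms unfolding neighbours_def adjr_cone_star_triangles
    by (auto simp: same_triangle)
qed

lemma rho_cone_star_triangles_le:
  fixes a b y z \<mu> :: real
  assumes pos: "0 < a" "0 < b" "0 < y" "0 < z"
    and apex: "b + real t * y + 3 * real k * z \<le> \<mu> * a"
    and centre: "a + real t * y \<le> \<mu> * b"
    and leaf: "a + b \<le> \<mu> * y"
    and triangle: "a + 2 * z \<le> \<mu> * z"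
  shows "rho (cone_star_triangles t k) \<le> \<mu>"
proof (rule rho_le_if_subeigenvector)
  define v where "v i = (if i = 0 then a else if i = 1 then b else if i < t + 2 then y else z)" for i
  show "0 < nverts (cone_star_triangles t k)"
    by simp
  show "0 < v i" for i
    using pos by (simp add: v_def)
  have sum_leaves: "(\<Sum>j\<in>{2..<t + 2}. v j) = t * y"
    by (simp add: v_def)
  have sum_triangles: "(\<Sum>j\<in>{t + 2..<t + 2 + 3 * k}. v j) = 3 * k * z"
    by (simp add: v_def)
  fix i assume i: "i < nverts (cone_star_triangles t k)"
  consider "i = 0" | "i = 1" | "2 \<le> i" "i < t + 2"
    | q r where "q < k" "r < 3" "i = t + 2 + 3 * q + r"
  proof (cases "i < t + 2")
    case False
    then show thesis
      using i that(4)[of "(i - (t + 2)) div 3" "(i - (t + 2)) mod 3"] by simp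
  qed (use that in fastforce)
  then show "(\<Sum>j\<in>neighbours (cone_star_triangles t k) i. v j) \<le> \<mu> * v i"
  proof cases
    case 1
    have "{1..<t + 2 + 3 * k} = insert 1 ({2..<t + 2} \<union> {t + 2..<t + 2 + 3 * k})"
      by auto
    then have "(\<Sum>j\<in>{1..<t + 2 + 3 * k}. v j) = b + t * y + 3 * k * z"
      using sum_leaves sum_triangles by (simp add: sum.union_disjoint v_def)
    then show ?thesis
      using 1 apex by (simp add: neighbours_cone_star_triangles_apex v_def)
  next
    case 2
    then show ?thesis
      unfolding 2 neighbours_cone_star_triangles_centre
      using centre sum_leaves by (simp add: v_def)
  next
    case 3
    then show ?thesis
      using leaf by (simp add: neighbours_cone_star_triangles_leaf v_def)
  next
    case 4
    let ?T = "{t + 2 + 3 * q..<t + 5 + 3 * q}"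
    have nbrs: "neighbours (cone_star_triangles t k) i = insert 0 (?T - {i})"
      unfolding 4(3) by (rule neighbours_cone_star_triangles_triangle[OF 4(1,2)])
    have "(\<Sum>j\<in>?T - {i}. v j) = (\<Sum>j\<in>?T - {i}. z)"
      by (intro sum.cong) (auto simp: v_def)
    also have "\<dots> = 2 * z"
      using 4 by simp
    finally show ?thesis
      unfolding nbrs using 4 triangle by (simp add: v_def)
  qed
qed

lemma rho_cone_star_triangles_le_cubic_root:
  fixes \<mu> :: real
  assumes "2 < \<mu>" and cubic: "3 * real k * \<mu> \<le> (\<mu> - 2) * (\<mu>^2 - \<mu> - 2 * real t)"
  shows "rho (cone_star_triangles t k) \<le> \<mu>"
proof (rule rho_cone_star_triangles_le
    [where a = "\<mu> * (\<mu> - 2)" and b = "\<mu> * (\<mu> - 2)" and y = "2 * (\<mu> - 2)" and z = \<mu>])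
  txt \<open>This vector makes the leaf and triangle rows tight.\<close>
  have "0 \<le> 3 * real k * \<mu>"
    using \<open>2 < \<mu>\<close> by simp
  then have "0 \<le> (\<mu> - 2) * (\<mu>^2 - \<mu> - 2 * real t)"
    using cubic by linarith
  then show "\<mu> * (\<mu> - 2) + real t * (2 * (\<mu> - 2)) \<le> \<mu> * (\<mu> * (\<mu> - 2))"
    by (simp add: power2_eq_square algebra_simps)
  show "\<mu> * (\<mu> - 2) + real t * (2 * (\<mu> - 2)) + 3 * real k * \<mu> \<le> \<mu> * (\<mu> * (\<mu> - 2))"
    using cubic by (simp add: power2_eq_square algebra_simps)
qed (use \<open>2 < \<mu>\<close> in \<open>simp_all add: algebra_simps\<close>)

lemma cubic_root_gt_4:
  fixes t k :: real
  assumes "0 \<le> t" and "0 \<le> k" and "7 \<le> t + 3 * k"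
  obtains \<mu> where "4 < \<mu>" and "3 * k * \<mu> = (\<mu> - 2) * (\<mu>^2 - \<mu> - 2 * t)"
proof -
  define g where "g x = (x - 2) * (x^2 - x - 2 * t) - 3 * k * x" for x
  define X where "X = t + 3 * k"
  have "g 4 < 0"
    using assms(3) by (simp add: g_def)
  have "3 * k \<le> X" "t \<le> X" "7 \<le> X"
    using assms by (simp_all add: X_def)
  have "0 \<le> (X - 7) * (X + 1)"
    using \<open>7 \<le> X\<close> by simp
  then have "X \<le> (X - 2) * (X - 3)"
    by (simp add: algebra_simps)
  have "(X - 2) * (X * (X - 3)) \<le> (X - 2) * (X^2 - X - 2 * t)"
    using \<open>t \<le> X\<close> \<open>7 \<le> X\<close> by (intro mult_left_mono) (simp_all add: power2_eq_square algebra_simps)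
  moreover have "X * X \<le> X * ((X - 2) * (X - 3))"
    using \<open>X \<le> (X - 2) * (X - 3)\<close> \<open>7 \<le> X\<close> by (intro mult_left_mono) simp_all
  moreover have "3 * k * X \<le> X * X"
    using \<open>3 * k \<le> X\<close> \<open>7 \<le> X\<close> by (intro mult_right_mono) simp_all
  ultimately have "0 \<le> g X"
    by (simp add: g_def algebra_simps)
  have "continuous_on {4..X} g"
    unfolding g_def by (intro continuous_intros)
  then obtain \<mu> where "4 \<le> \<mu>" "g \<mu> = 0"
    using IVT'[of g 4 0 X] \<open>g 4 < 0\<close> \<open>0 \<le> g X\<close> \<open>7 \<le> X\<close> by auto
  moreover have "\<mu> \<noteq> 4"
    using \<open>g 4 < 0\<close> \<open>g \<mu> = 0\<close> by auto
  ultimately show thesis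
    by (intro that[of \<mu>]) (simp_all add: g_def)
qed

lemma rho_cone_star_triangles_bound:
  assumes "2 \<le> t" and "1 \<le> k"
  obtains \<mu> where "rho (cone_star_triangles t k) \<le> \<mu>" and "\<mu>^2 - \<mu> < 2 * real (t + 3 * k)"
proof (cases "7 \<le> t + 3 * k")
  case True
  then obtain \<mu> where "4 < \<mu>" and cubic: "3 * real k * \<mu> = (\<mu> - 2) * (\<mu>^2 - \<mu> - 2 * real t)"
    using cubic_root_gt_4[of "real t" "real k"] by force
  have "(\<mu> - 2) * (\<mu>^2 - \<mu> - 2 * real t - 6 * real k) = - (3 * real k * (\<mu> - 4))"
    using cubic by (simp add: algebra_simps)
  also have "\<dots> < 0"
    using \<open>4 < \<mu>\<close> assms(2) by simp
  finally have "\<mu>^2 - \<mu> < 2 * real (t + 3 * k)"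
    using \<open>4 < \<mu>\<close> by (simp add: mult_less_0_iff)
  moreover have "rho (cone_star_triangles t k) \<le> \<mu>"
    using \<open>4 < \<mu>\<close> cubic by (intro rho_cone_star_triangles_le_cubic_root) simp_all
  ultimately show thesis
    using that by blast
next
  txt \<open>For t + 3k \<le> 6 no vector with equal apex and centre entries gives a bound \<mu> with
    \<mu>^2 - \<mu> < 2(t + 3k), so explicit rational vectors are used.\<close>
  case False
  then have "k = 1" "t = 2 \<or> t = 3"
    using assms by auto
  then consider "k = 1" "t = 2" | "k = 1" "t = 3"
    by blast
  then show thesis
  proof cases
    case 1
    have "rho (cone_star_triangles t k) \<le> 7 / 2"
      by (rule rho_cone_star_triangles_le[where a = 1 and b = "11/20" and y = "9/20" and z = "2/3"])
        (simp_all add: 1)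
    then show thesis
      by (rule that) (simp add: 1 power2_eq_square)
  next
    case 2
    have "rho (cone_star_triangles t k) \<le> 19 / 5"
      by (rule rho_cone_star_triangles_le[where a = 1 and b = "3/5" and y = "17/40" and z = "5/9"])
        (simp_all add: 2)
    then show thesis
      by (rule that) (simp add: 2 power2_eq_square)
  qed
qed

theorem lemma4p6:
  fixes t n :: nat
  assumes "t \<ge> 2" and "n \<ge> t + 5" and "(n - t) mod 3 = 2"
  shows "rho (gjoin (complete 1) (gunion (star t) (copies ((n - t - 2) div 3) (complete 3))))
           < rho (complete_tripartite 1 1 (n - 2))"
proof -
  define k where "k = (n - t - 2) div 3"
  have "n - t - 2 = 3 * ((n - t) div 3)"
    using assms(3) div_mult_mod_eq[of "n - t" 3] by linarith
  then have "3 * k = n - t - 2"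
    unfolding k_def by simp
  then have n: "n - 2 = t + 3 * k" and "1 \<le> k"
    using assms(2) by linarith+
  obtain \<mu> where "rho (cone_star_triangles t k) \<le> \<mu>" and "\<mu>^2 - \<mu> < 2 * real (t + 3 * k)"
    using rho_cone_star_triangles_bound[OF assms(1) \<open>1 \<le> k\<close>] by blast
  moreover have "\<mu> < (1 + sqrt (1 + 4 * (2 * real (t + 3 * k)))) / 2"
    using \<open>\<mu>^2 - \<mu> < 2 * real (t + 3 * k)\<close> by (intro less_quadratic_root) simp_all
  ultimately have "rho (cone_star_triangles t k) < rho (complete_tripartite 1 1 (n - 2))"
    unfolding rho_complete_tripartite_1_1 n by simp
  then show ?thesis
    unfolding cone_star_triangles_def k_def .
qed

end
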